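(* For every $n\geq 2$, if $T$ is the caterpillar tree on a leaf set $X$ with $|X|=n$, then there exist strictly positive edge lengths for $T$ such that the ranking $\pi_T$ is strict and reversible with respect to $X'=\{x\}$, where $x=\arg\min_{x'\in X}FP_T(x')$ is the leaf with the lowest Fair Proportion index.
   Context: A rooted binary phylogenetic $X$-tree ($X$ finite, $|X|=n$) is a rooted tree whose root $\rho$ has in-degree 0 and out-degree 2, all edges directed away from $\rho$, all other interior vertices have in-degree 1 and out-degree 2, and whose leaves are bijectively labelled by $X$. Every edge $e$ has a strictly positive length $\lambda_e$. A cherry is a pair of leaves with the same parent; a caterpillar tree is a rooted binary phylogenetic tree with exactly one cherry. The Fair Proportion index of $x\in X$ is $FP_T(x)=\sum_{e\in P(T;\rho,x)}\lambda_e/D_e$, where $P(T;\rho,x)$ is the path from $\rho$ to $x$ and $D_e$ is the number of leaves descended from $e$. For $Y\subseteq X$, the induced subtree $T_Y$ is obtained from the minimal subtree of $T$ connecting $Y$ by suppressing all non-root vertices of in- and out-degree 1, adding the lengths of merged edges; if the root then has out-degree 1, it and its incident edge are deleted. The ranking $\pi_T$ orders $X$ by decreasing $FP_T$; it is strict if all values $FP_T(x)$ are pairwise distinct. For $X'\subset X$, $\widetilde X=X\setminus X'$ and $\widetilde T=T_{\widetilde X}$, a strict ranking $\pi_T$ is reversible with respect to $X'$ if for all distinct $x_i,x_j\in\widetilde X$, $FP_T(x_i)>FP_T(x_j)$ implies $FP_{\widetilde T}(x_i)<FP_{\widetilde T}(x_j)$. *)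

theory Defs
  imports Complex_Main
begin

text \<open>A node
  Nd a l b r has left child l reached by an edge of length a and right
  child r reached by an edge of length b.\<close>
datatype 'a ltree = Lf 'a | Nd real "'a ltree" real "'a ltree"

fun leaf_list :: "'a ltree \<Rightarrow> 'a list" where
  "leaf_list (Lf x) = [x]"
| "leaf_list (Nd a l b r) = leaf_list l @ leaf_list r"

fun leaves :: "'a ltree \<Rightarrow> 'a set" where
  "leaves (Lf x) = {x}"
| "leaves (Nd a l b r) = leaves l \<union> leaves r"

fun shape :: "'a ltree \<Rightarrow> 'a ltree" where
  "shape (Lf x) = Lf x"
| "shape (Nd a l b r) = Nd 0 (shape l) 0 (shape r)"

fun pos_lengths :: "'a ltree \<Rightarrow> bool" where
  "pos_lengths (Lf x) = True"
| "pos_lengths (Nd a l b r) = (a > 0 \<and> b > 0 \<and> pos_lengths l \<and> pos_lengths r)"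

text \<open>Rooted binary phylogenetic X-tree topology (root of out-degree 2,
  leaves bijectively labelled by X); edge lengths are not constrained here.\<close>
definition phylo_tree :: "'a set \<Rightarrow> 'a ltree \<Rightarrow> bool" where
  "phylo_tree X T \<longleftrightarrow> (\<exists>a l b r. T = Nd a l b r) \<and> distinct (leaf_list T)
     \<and> set (leaf_list T) = X"

fun cherries :: "'a ltree \<Rightarrow> 'a set set" where
  "cherries (Lf x) = {}"
| "cherries (Nd a (Lf x) b (Lf y)) = {{x, y}}"
| "cherries (Nd a l b r) = cherries l \<union> cherries r"

definition caterpillar :: "'a ltree \<Rightarrow> bool" where
  "caterpillar T \<longleftrightarrow> card (cherries T) = 1"

fun FP :: "'a ltree \<Rightarrow> 'a \<Rightarrow> real" where
  "FP (Lf y) x = 0"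
| "FP (Nd a l b r) x =
     (if x \<in> leaves l then a / real (card (leaves l)) + FP l x else 0)
   + (if x \<in> leaves r then b / real (card (leaves r)) + FP r x else 0)"

text \<open>Restriction to Y: returns None if no leaf of Y is below, otherwise
  Some (d, S) where S is the restricted subtree and d is the length that
  must be added to the edge entering it (from suppressed degree-1 vertices).\<close>
fun restr :: "'a set \<Rightarrow> 'a ltree \<Rightarrow> (real \<times> 'a ltree) option" where
  "restr Y (Lf y) = (if y \<in> Y then Some (0, Lf y) else None)"
| "restr Y (Nd a l b r) =
     (case (restr Y l, restr Y r) of
        (Some (d1, s1), Some (d2, s2)) \<Rightarrow> Some (0, Nd (a + d1) s1 (b + d2) s2)
      | (Some (d1, s1), None) \<Rightarrow> Some (a + d1, s1)
      | (None, Some (d2, s2)) \<Rightarrow> Some (b + d2, s2)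
      | (None, None) \<Rightarrow> None)"

text \<open>Induced subtree T_Y: the accumulated length above the top vertex
  (root of out-degree 1 and its incident edge) is deleted.\<close>
definition induced :: "'a ltree \<Rightarrow> 'a set \<Rightarrow> 'a ltree" where
  "induced T Y = snd (the (restr Y T))"

definition strict_ranking :: "'a ltree \<Rightarrow> bool" where
  "strict_ranking T \<longleftrightarrow> inj_on (FP T) (leaves T)"

definition reversible :: "'a ltree \<Rightarrow> 'a set \<Rightarrow> bool" where
  "reversible T X' \<longleftrightarrow> strict_ranking T \<and>
     (let Xt = leaves T - X'; Tt = induced T Xt in
      \<forall>xi\<in>Xt. \<forall>xj\<in>Xt. xi \<noteq> xj \<longrightarrow> FP T xi > FP T xj \<longrightarrow> FP Tt xi < FP Tt xj)"

end

theory Submission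
  imports Defs
begin

text \<open>A caterpillar is built from its cherry by repeatedly hanging a new leaf z above the
  current tree.  If the current tree has m leaves, the new pendant edge gets length
  1 + m^2 and the edge to the old tree length 2m(m - 1).  This raises all old Fair
  Proportion values by 2(m - 1) and puts z strictly on top.  After deleting the cherry
  leaf y (the unique minimum) the edge to the old part has only m - 1 leaves below it,
  so the same lengths raise the old values by 2m instead and put z strictly at the
  bottom.  By induction the order of the remaining leaves is exactly reversed.\<close>

lemma bij_betw_fun_upd_insert:
  "bij_betw h A B \<Longrightarrow> z \<notin> A \<Longrightarrow> w \<notin> B \<Longrightarrow> bij_betw (h(z := w)) (insert z A) (insert w B)"
  unfolding bij_betw_def by (auto simp: inj_on_fun_updI image_iff)

lemma leaves_eq_set_leaf_list: "leaves T = set (leaf_list T)"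
  by (induction T) auto

lemma finite_leaves [simp]: "finite (leaves T)"
  by (simp add: leaves_eq_set_leaf_list)

lemma leaf_list_shape [simp]: "leaf_list (shape T) = leaf_list T"
  by (induction T) auto

lemma leaves_shape [simp]: "leaves (shape T) = leaves T"
  by (simp add: leaves_eq_set_leaf_list)

lemma leaf_list_eq_if_shape_eq: "shape T = shape T' \<Longrightarrow> leaf_list T = leaf_list T'"
  by (metis leaf_list_shape)

lemma leaves_eq_if_shape_eq: "shape T = shape T' \<Longrightarrow> leaves T = leaves T'"
  by (metis leaves_shape)

lemma restr_cong: "Y \<inter> leaves T = Y' \<inter> leaves T \<Longrightarrow> restr Y T = restr Y' T"
proof (induction T)
  case (Nd a l b r)
  then have "Y \<inter> leaves l = Y' \<inter> leaves l" "Y \<inter> leaves r = Y' \<inter> leaves r" by auto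
  with Nd.IH show ?case by simp
qed auto

lemma restr_eq_None_iff: "restr Y T = None \<longleftrightarrow> Y \<inter> leaves T = {}"
  by (induction T) (auto split: option.splits)

lemma leaves_restr: "restr Y T = Some (d, R) \<Longrightarrow> leaves R = Y \<inter> leaves T"
  by (induction T arbitrary: d R) (auto simp: restr_eq_None_iff split: option.splits if_splits)

fun pendant :: "bool \<Rightarrow> real \<Rightarrow> 'a \<Rightarrow> real \<Rightarrow> 'a ltree \<Rightarrow> 'a ltree" where
  "pendant True f z g S = Nd f (Lf z) g S"
| "pendant False f z g S = Nd g S f (Lf z)"

lemma leaves_pendant [simp]: "leaves (pendant left f z g S) = insert z (leaves S)"
  by (cases left) auto

lemma shape_pendant [simp]: "shape (pendant left f z g S) = pendant left 0 z 0 (shape S)"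
  by (cases left) auto

lemma pos_lengths_pendant [simp]:
  "pos_lengths (pendant left f z g S) \<longleftrightarrow> f > 0 \<and> g > 0 \<and> pos_lengths S"
  by (cases left) auto

lemma FP_pendant_leaf: "z \<notin> leaves S \<Longrightarrow> FP (pendant left f z g S) z = f"
  by (cases left) auto

lemma FP_pendant_subtree:
  "z \<notin> leaves S \<Longrightarrow> x \<in> leaves S \<Longrightarrow> FP (pendant left f z g S) x = g / card (leaves S) + FP S x"
  by (cases left) auto

lemma restr_pendant:
  "z \<in> Y \<Longrightarrow> restr Y S = Some (d, R) \<Longrightarrow> restr Y (pendant left f z g S) = Some (0, pendant left f z (g + d) R)"
  by (cases left) auto

inductive caterpillar_tree :: "'a ltree \<Rightarrow> bool" where
  cherry: "x \<noteq> y \<Longrightarrow> caterpillar_tree (Nd a (Lf x) b (Lf y))"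
| attach: "caterpillar_tree S \<Longrightarrow> z \<notin> leaves S \<Longrightarrow> caterpillar_tree (pendant left a z b S)"

lemma card_leaves_caterpillar_tree: "caterpillar_tree T \<Longrightarrow> 2 \<le> card (leaves T)"
  by (induction rule: caterpillar_tree.induct) auto

lemma finite_cherries: "finite (cherries T)"
  by (induction T rule: cherries.induct) auto

lemma cherries_subset_leaves: "c \<in> cherries T \<Longrightarrow> c \<subseteq> leaves T \<and> c \<noteq> {}"
  by (induction T rule: cherries.induct) auto

lemma cherries_eq_empty_iff: "cherries T = {} \<longleftrightarrow> (\<exists>x. T = Lf x)"
proof (induction T)
  case (Nd a l b r)
  then show ?case by (cases l; cases r) auto
qed simp

lemma two_le_card_cherries:
  assumes "distinct (leaf_list (Nd a l b r))" and "cherries l \<noteq> {}" and "cherries r \<noteq> {}"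
  shows "2 \<le> card (cherries (Nd a l b r))"
proof -
  have "cherries (Nd a l b r) = cherries l \<union> cherries r"
    using assms(2) by (cases l) (auto simp: cherries_eq_empty_iff)
  moreover have "cherries l \<inter> cherries r = {}"
  proof -
    have "leaves l \<inter> leaves r = {}"
      using assms(1) by (auto simp: leaves_eq_set_leaf_list)
    then show ?thesis using cherries_subset_leaves by blast
  qed
  moreover have "card (cherries l) \<ge> 1" "card (cherries r) \<ge> 1"
    using assms(2,3) finite_cherries by (simp_all add: Suc_le_eq card_gt_0_iff)
  ultimately show ?thesis
    by (simp add: card_Un_disjoint finite_cherries)
qed

lemma caterpillar_tree_if_caterpillar:
  "distinct (leaf_list T) \<Longrightarrow> caterpillar T \<Longrightarrow> caterpillar_tree T"
proof (induction T)
  case (Nd a l b r)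
  then have dl: "distinct (leaf_list l)" and dr: "distinct (leaf_list r)"
    and disj: "leaves l \<inter> leaves r = {}" by (auto simp: leaves_eq_set_leaf_list)
  show ?case
  proof (cases l)
    case (Lf x)
    show ?thesis
    proof (cases r)
      case (Lf y)
      then show ?thesis using \<open>l = Lf x\<close> disj by (auto intro: caterpillar_tree.cherry)
    next
      case (Nd a' l' b' r')
      then have "caterpillar_tree r"
        using Nd.IH(2) dr Nd.prems(2) \<open>l = Lf x\<close> by (simp add: caterpillar_def)
      then show ?thesis
        using caterpillar_tree.attach[of r x True a b] \<open>l = Lf x\<close> disj by simp
    qed
  next
    case (Nd a' l' b' r')
    show ?thesis
    proof (cases r)
      case (Lf y)
      then have "caterpillar_tree l"
        using Nd.IH(1) dl Nd.prems(2) \<open>l = Nd a' l' b' r'\<close> by (simp add: caterpillar_def)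
      then show ?thesis
        using caterpillar_tree.attach[of l y False b a] \<open>r = Lf y\<close> disj by simp
    next
      case (Nd a'' l'' b'' r'')
      then have "2 \<le> card (cherries (Nd a l b r))"
        using two_le_card_cherries[OF Nd.prems(1)] \<open>l = Nd a' l' b' r'\<close>
        by (simp add: cherries_eq_empty_iff)
      then show ?thesis using Nd.prems(2) by (simp add: caterpillar_def)
    qed
  qed
qed (simp add: caterpillar_def)

text \<open>h ranks the m leaves of T from the bottom, with the cherry leaf y at rank 0.  The
  induced subtree on the other leaves is R, carrying the length d of its suppressed top
  edge; d/(m - 1) is what that edge contributes once R hangs below it.\<close>
definition rank_reversing :: "'a ltree \<Rightarrow> 'a \<Rightarrow> ('a \<Rightarrow> nat) \<Rightarrow> bool" where
  "rank_reversing T y h \<longleftrightarrow> (let m = card (leaves T) in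
     pos_lengths T \<and> y \<in> leaves T \<and> h y = 0 \<and> bij_betw h (leaves T) {..<m}
     \<and> (\<forall>x\<in>leaves T. FP T x = 1 + (real m - 1) * (real m - 2) + h x)
     \<and> (\<exists>d R. restr (leaves T - {y}) T = Some (d, R)
          \<and> (\<forall>x\<in>leaves T - {y}. d / (real m - 1) + FP R x = real m ^ 2 - real m + 1 - h x)))"

lemma rank_reversing_cherry:
  assumes "x \<noteq> y"
  shows "rank_reversing (Nd 2 (Lf x) 1 (Lf y)) y ((\<lambda>_. 0)(x := 1))"
proof -
  have "{..<2} = {1, 0::nat}"
    by auto
  then have "bij_betw ((\<lambda>_. 0)(x := 1)) {x, y} {..<2::nat}"
    using bij_betw_fun_upd_insert[of "\<lambda>_. 0::nat" "{y}" "{0}" x 1] assms by simp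
  moreover have "restr ({x, y} - {y}) (Nd 2 (Lf x) 1 (Lf y)) = Some (2, Lf x)"
    using assms by simp
  ultimately show ?thesis
    using assms by (auto simp: rank_reversing_def numeral_2_eq_2 insert_commute)
qed

lemma rank_reversing_attach:
  fixes S :: "'a ltree"
  assumes inv: "rank_reversing S y h" and z: "z \<notin> leaves S"
    and m: "m = card (leaves S)" "2 \<le> m"
  defines "f \<equiv> 1 + real m ^ 2" and "g \<equiv> 2 * real m * (real m - 1)"
  shows "rank_reversing (pendant left f z g S) y (h(z := m))"
proof -
  define T where "T = pendant left f z g S"
  from inv obtain d R where
    pos: "pos_lengths S" and y: "y \<in> leaves S" and hy: "h y = 0"
    and bij: "bij_betw h (leaves S) {..<m}"
    and FP_S: "\<forall>x\<in>leaves S. FP S x = 1 + (real m - 1) * (real m - 2) + h x"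
    and restr_S: "restr (leaves S - {y}) S = Some (d, R)"
    and FP_R: "\<forall>x\<in>leaves S - {y}. d / (real m - 1) + FP R x = real m ^ 2 - real m + 1 - h x"
    unfolding rank_reversing_def Let_def m(1) by blast
  have card_T: "card (leaves T) = Suc m"
    using z m(1) by (simp add: T_def)
  have leaves_R: "leaves R = leaves S - {y}"
    using leaves_restr[OF restr_S] by blast
  have card_R: "real (card (leaves R)) = real m - 1"
    using leaves_R y m by simp
  have "restr (leaves T - {y}) S = restr (leaves S - {y}) S"
    by (rule restr_cong) (auto simp: T_def)
  then have restr_T: "restr (leaves T - {y}) T = Some (0, pendant left f z (g + d) R)"
    using restr_pendant[of z "leaves T - {y}" S d R] restr_S y z by (auto simp: T_def)
  have FP_T: "FP T x = 1 + (real (Suc m) - 1) * (real (Suc m) - 2) + (h(z := m)) x"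
    if "x \<in> leaves T" for x
  proof (cases "x = z")
    case True
    then show ?thesis
      using FP_pendant_leaf[OF z] by (simp add: T_def f_def power2_eq_square algebra_simps)
  next
    case False
    then have x: "x \<in> leaves S" using that by (simp add: T_def)
    have "FP T x = g / real m + FP S x"
      using FP_pendant_subtree[OF z x] m(1) by (simp add: T_def)
    also have "\<dots> = 2 * (real m - 1) + FP S x"
      using m(2) by (simp add: g_def)
    finally show ?thesis
      using FP_S x False by (simp add: algebra_simps)
  qed
  have FP_R': "0 / (real (Suc m) - 1) + FP (pendant left f z (g + d) R) x
      = real (Suc m) ^ 2 - real (Suc m) + 1 - (h(z := m)) x"
    if "x \<in> leaves T - {y}" for x
  proof -
    have z_R: "z \<notin> leaves R" using z leaves_R by blast
    show ?thesis
    proof (cases "x = z")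
      case True
      then show ?thesis
        using FP_pendant_leaf[OF z_R] by (simp add: f_def power2_eq_square algebra_simps)
    next
      case False
      then have x: "x \<in> leaves R" using that leaves_R by (simp add: T_def)
      have "FP (pendant left f z (g + d) R) x = (g + d) / (real m - 1) + FP R x"
        using FP_pendant_subtree[OF z_R x] card_R by simp
      also have "\<dots> = 2 * real m + (d / (real m - 1) + FP R x)"
        using m(2) by (simp add: g_def add_divide_distrib)
      finally show ?thesis
        using FP_R x leaves_R False by (simp add: power2_eq_square algebra_simps)
    qed
  qed
  have "bij_betw (h(z := m)) (leaves T) {..<Suc m}"
    using bij_betw_fun_upd_insert[OF bij z, of m] by (simp add: T_def lessThan_Suc)
  moreover have "pos_lengths T"
    using pos m(2) by (simp add: T_def f_def g_def add_pos_nonneg)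
  ultimately show ?thesis
    unfolding T_def[symmetric] rank_reversing_def Let_def card_T
    using y z hy FP_T restr_T FP_R' by (auto simp: T_def)
qed

lemma caterpillar_tree_rank_reversing:
  "caterpillar_tree T \<Longrightarrow> \<exists>T' y h. shape T' = shape T \<and> rank_reversing T' y h"
proof (induction rule: caterpillar_tree.induct)
  case (cherry x y a b)
  have "shape (Nd 2 (Lf x) 1 (Lf y)) = shape (Nd a (Lf x) b (Lf y))"
    by simp
  with rank_reversing_cherry[OF cherry] show ?case
    by blast
next
  case (attach S z left a b)
  then obtain S' y h where shape: "shape S' = shape S" and inv: "rank_reversing S' y h"
    by blast
  have leaves: "leaves S' = leaves S"
    using leaves_eq_if_shape_eq[OF shape] .
  define m where "m = card (leaves S')"
  have "2 \<le> m"
    using card_leaves_caterpillar_tree[OF attach.hyps(1)] leaves by (simp add: m_def)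
  then have "rank_reversing (pendant left (1 + real m ^ 2) z (2 * real m * (real m - 1)) S') y (h(z := m))"
    using rank_reversing_attach[OF inv _ m_def] attach.hyps(2) leaves by simp
  moreover have "shape (pendant left (1 + real m ^ 2) z (2 * real m * (real m - 1)) S') = shape (pendant left a z b S)"
    using shape by simp
  ultimately show ?case
    by blast
qed

lemma rank_reversing_FP:
  "rank_reversing T y h \<Longrightarrow> x \<in> leaves T
    \<Longrightarrow> FP T x = 1 + (real (card (leaves T)) - 1) * (real (card (leaves T)) - 2) + h x"
  by (simp add: rank_reversing_def Let_def)

lemma rank_reversing_strict_ranking:
  assumes "rank_reversing T y h"
  shows "strict_ranking T"
  unfolding strict_ranking_def
proof (rule inj_onI)
  fix x x' assume x: "x \<in> leaves T" and x': "x' \<in> leaves T" and "FP T x = FP T x'"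
  then have "h x = h x'"
    using rank_reversing_FP[OF assms x] rank_reversing_FP[OF assms x'] by simp
  moreover have "inj_on h (leaves T)"
    using assms by (simp add: rank_reversing_def Let_def bij_betw_def)
  ultimately show "x = x'"
    using x x' by (simp add: inj_on_eq_iff)
qed

lemma rank_reversing_reversible:
  assumes inv: "rank_reversing T y h" and x: "x \<in> leaves T"
    and min: "\<forall>x'\<in>leaves T. FP T x \<le> FP T x'"
  shows "reversible T {x}"
proof -
  define m where "m = card (leaves T)"
  from inv obtain d R where
    y: "y \<in> leaves T" and hy: "h y = 0" and inj: "inj_on h (leaves T)"
    and restr_T: "restr (leaves T - {y}) T = Some (d, R)"
    and FP_R: "\<forall>x\<in>leaves T - {y}. d / (real m - 1) + FP R x = real m ^ 2 - real m + 1 - h x"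
    unfolding rank_reversing_def Let_def m_def bij_betw_def by blast
  have "FP T x \<le> FP T y"
    using min y by blast
  then have "h x = h y"
    using rank_reversing_FP[OF inv x] rank_reversing_FP[OF inv y] hy by simp
  then have "x = y"
    using inj x y by (simp add: inj_on_eq_iff)
  moreover have "induced T (leaves T - {y}) = R"
    using restr_T by (simp add: induced_def)
  moreover have "FP R xi < FP R xj"
    if "xi \<in> leaves T - {y}" "xj \<in> leaves T - {y}" "FP T xi > FP T xj" for xi xj
  proof -
    have "h xj < h xi"
      using that rank_reversing_FP[OF inv, of xi] rank_reversing_FP[OF inv, of xj] by simp
    then have "d / (real m - 1) + FP R xi < d / (real m - 1) + FP R xj"
      using FP_R that(1,2) by simp
    then show ?thesis
      by simp
  qed
  ultimately show ?thesis
    using rank_reversing_strict_ranking[OF inv] by (simp add: reversible_def)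
qed

theorem corollary1:
  fixes X :: "'a set" and n :: nat and T :: "'a ltree"
  assumes "finite X" and "card X = n" and "n \<ge> 2"
    and "phylo_tree X T" and "caterpillar T"
  shows "\<exists>T'. shape T' = shape T \<and> phylo_tree X T' \<and> pos_lengths T' \<and> strict_ranking T'
    \<and> (\<forall>x\<in>X. (\<forall>x'\<in>X. FP T' x \<le> FP T' x') \<longrightarrow> reversible T' {x})"
proof -
  obtain a l b r where T: "T = Nd a l b r" and dist: "distinct (leaf_list T)"
    and X: "set (leaf_list T) = X"
    using assms(4) unfolding phylo_tree_def by blast
  have "caterpillar_tree T"
    using caterpillar_tree_if_caterpillar[OF dist assms(5)] .
  then obtain T' y h where shape: "shape T' = shape T" and inv: "rank_reversing T' y h"
    using caterpillar_tree_rank_reversing by blast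
  have leaf_list: "leaf_list T' = leaf_list T"
    using leaf_list_eq_if_shape_eq[OF shape] .
  then have leaves: "leaves T' = X"
    using X by (simp add: leaves_eq_set_leaf_list)
  have "\<exists>a l b r. T' = Nd a l b r"
    using shape T by (cases T') auto
  then have "phylo_tree X T'"
    using leaf_list dist X by (simp add: phylo_tree_def)
  moreover have "pos_lengths T'"
    using inv by (simp add: rank_reversing_def Let_def)
  ultimately show ?thesis
    using shape rank_reversing_strict_ranking[OF inv] rank_reversing_reversible[OF inv] leaves
    by auto
qed

end
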